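(* Let $f:\mathbb{R}^n\to\mathbb{R}$ be bounded, $\lambda>0$, $h>0$, and let $x_k\in h\mathbb{Z}^n$ be a grid point. Then $$M^h_\lambda(f)(x_k)=g_m(x_k)\quad\text{for every integer } m\ge\Big\lfloor\tfrac1h\sqrt{\mathrm{osc}(f)/\lambda}\Big\rfloor+1,$$ where $g_m(x_k)=\inf\{f(x_k+rh)+\lambda h^2|r|^2:\ r\in\mathbb{Z}^n,\ |r|_\infty\le m\}$.
   Context: $M^h_\lambda(f)(x_k)=\inf\{f(x_k+rh)+\lambda h^2|r|^2:\ r\in\mathbb{Z}^n\}$ is the discrete lower Moreau envelope; $\mathrm{osc}(f)=\sup f-\inf f$; $\lfloor x\rfloor$ is the integer part of $x$; $|r|$ is the Euclidean norm and $|r|_\infty=\max_i|r_i|$. *)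

theory Defs
  imports "HOL-Analysis.Analysis"
begin

definition int_lattice :: "(real^'n) set" where
  "int_lattice = {r. \<forall>i. r $ i \<in> \<int>}"

definition sup_norm :: "real^'n \<Rightarrow> real" where
  "sup_norm r = Max (range (\<lambda>i. \<bar>r $ i\<bar>))"

definition disc_moreau :: "real \<Rightarrow> real \<Rightarrow> (real^'n \<Rightarrow> real) \<Rightarrow> real^'n \<Rightarrow> real" where
  "disc_moreau h lam f x =
     Inf ((\<lambda>r. f (x + h *\<^sub>R r) + lam * h\<^sup>2 * (norm r)\<^sup>2) ` int_lattice)"

definition disc_moreau_trunc :: "real \<Rightarrow> real \<Rightarrow> (real^'n \<Rightarrow> real) \<Rightarrow> int \<Rightarrow> real^'n \<Rightarrow> real" where
  "disc_moreau_trunc h lam f m x =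
     Inf ((\<lambda>r. f (x + h *\<^sub>R r) + lam * h\<^sup>2 * (norm r)\<^sup>2) `
          {r \<in> int_lattice. sup_norm r \<le> real_of_int m})"

definition osc :: "('a \<Rightarrow> real) \<Rightarrow> real" where
  "osc f = (SUP x. f x) - (INF x. f x)"

end

theory Submission
  imports Defs
begin

(* Replacing the lattice point r by the origin changes the f-term by at most osc f and removes
   the penalty lambda h^2 |r|^2. Once lambda h^2 |r|^2 >= osc f the candidate r is therefore no
   better than r = 0, and |r|_infty > m forces |r| > m > (1/h) sqrt (osc f / lambda). So points
   outside the cube |r|_infty <= m never lower the infimum. *)

lemma cInf_image_eq_subset_dominating:
  fixes g :: "'a \<Rightarrow> 'b::conditionally_complete_lattice"
  assumes "B \<subseteq> A" "B \<noteq> {}" "bdd_below (g ` A)"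
    and "\<And>a. a \<in> A \<Longrightarrow> \<exists>b\<in>B. g b \<le> g a"
  shows "Inf (g ` A) = Inf (g ` B)"
proof (rule antisym)
  show "Inf (g ` A) \<le> Inf (g ` B)"
    using assms(1-3) by (simp add: cInf_superset_mono image_mono)
  have "bdd_below (g ` B)"
    using assms(1,3) by (meson bdd_below_mono image_mono)
  show "Inf (g ` B) \<le> Inf (g ` A)"
  proof (rule cInf_greatest)
    show "g ` A \<noteq> {}" using assms(1,2) by blast
  next
    fix y assume "y \<in> g ` A"
    then obtain a where "a \<in> A" "y = g a" by blast
    then obtain b where "b \<in> B" "g b \<le> y" using assms(4) by blast
    then show "Inf (g ` B) \<le> y"
      using \<open>bdd_below (g ` B)\<close> by (meson cInf_lower image_eqI order_trans)
  qed
qed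

lemma osc_ge_diff:
  assumes "bounded (range f)"
  shows "f y - f z \<le> osc f"
proof -
  have "f y \<le> (SUP x. f x)"
    using assms by (simp add: bounded_imp_bdd_above cSup_upper)
  moreover have "(INF x. f x) \<le> f z"
    using assms by (simp add: bounded_imp_bdd_below cInf_lower)
  ultimately show ?thesis by (simp add: osc_def)
qed

lemma osc_nonneg: "bounded (range f) \<Longrightarrow> 0 \<le> osc f"
  using osc_ge_diff[of f x x for x] by simp

lemma sup_norm_le_norm: "sup_norm r \<le> norm r"
proof -
  have "sup_norm r \<in> range (\<lambda>i. \<bar>r $ i\<bar>)"
    unfolding sup_norm_def by (rule Max_in) auto
  then show ?thesis by (auto intro: component_le_norm_cart)
qed

lemma disc_moreau_eq_trunc_if_osc_le:
  fixes f :: "real^'n \<Rightarrow> real" and m :: int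
  assumes bounded: "bounded (range f)" and "lam \<ge> 0" "m \<ge> 0"
    and osc_le: "osc f \<le> lam * h\<^sup>2 * (real_of_int m)\<^sup>2"
  shows "disc_moreau h lam f x = disc_moreau_trunc h lam f m x"
proof -
  define g where "g r = f (x + h *\<^sub>R r) + lam * h\<^sup>2 * (norm r)\<^sup>2" for r :: "real^'n"
  define cube :: "(real^'n) set" where "cube = {r \<in> int_lattice. sup_norm r \<le> real_of_int m}"
  have origin_in_cube: "0 \<in> cube"
    using \<open>m \<ge> 0\<close> by (simp add: cube_def int_lattice_def sup_norm_def)
  have g_lower: "f x - osc f \<le> g r" for r
    using osc_ge_diff[OF bounded, of x "x + h *\<^sub>R r"] \<open>lam \<ge> 0\<close>
    by (simp add: g_def add_increasing2)
  have origin_dominates: "g 0 \<le> g r" if "r \<notin> cube" "r \<in> int_lattice" for r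
  proof -
    have "real_of_int m < norm r"
      using that sup_norm_le_norm[of r] by (auto simp: cube_def)
    then have "(real_of_int m)\<^sup>2 \<le> (norm r)\<^sup>2"
      using \<open>m \<ge> 0\<close> by (simp add: power_mono)
    then have "lam * h\<^sup>2 * (real_of_int m)\<^sup>2 \<le> lam * h\<^sup>2 * (norm r)\<^sup>2"
      using \<open>lam \<ge> 0\<close> by (simp add: mult_left_mono)
    then have "osc f \<le> lam * h\<^sup>2 * (norm r)\<^sup>2"
      using osc_le by linarith
    then show ?thesis
      using osc_ge_diff[OF bounded, of x "x + h *\<^sub>R r"] by (simp add: g_def)
  qed
  have "Inf (g ` int_lattice) = Inf (g ` cube)"
  proof (rule cInf_image_eq_subset_dominating)
    show "bdd_below (g ` int_lattice)"
      by (rule bdd_belowI2) (rule g_lower)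
    show "\<exists>b\<in>cube. g b \<le> g a" if "a \<in> int_lattice" for a
      using that origin_in_cube origin_dominates by (cases "a \<in> cube") auto
  qed (use origin_in_cube in \<open>auto simp: cube_def\<close>)
  then show ?thesis
    by (simp add: disc_moreau_def disc_moreau_trunc_def g_def cube_def)
qed

theorem proposition4p8:
  fixes f :: "real^'n \<Rightarrow> real" and lam h :: real and x :: "real^'n" and m :: int
  assumes "bounded (range f)"
    and "lam > 0" and "h > 0"
    and "\<exists>k \<in> int_lattice. x = h *\<^sub>R k"
    and "m \<ge> \<lfloor>(1 / h) * sqrt (osc f / lam)\<rfloor> + 1"
  shows "disc_moreau h lam f x = disc_moreau_trunc h lam f m x"
proof (rule disc_moreau_eq_trunc_if_osc_le)
  define s where "s = (1 / h) * sqrt (osc f / lam)"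
  have osc: "0 \<le> osc f" using assms(1) by (rule osc_nonneg)
  then have "0 \<le> s" using assms(2,3) by (simp add: s_def)
  moreover have "s < real_of_int m"
    using assms(5) floor_correct[of s] unfolding s_def by linarith
  ultimately have "s\<^sup>2 \<le> (real_of_int m)\<^sup>2"
    by (simp add: power_mono)
  moreover have "lam * h\<^sup>2 * s\<^sup>2 = osc f"
    using osc assms(2,3) by (simp add: s_def power_mult_distrib power_divide)
  ultimately show "osc f \<le> lam * h\<^sup>2 * (real_of_int m)\<^sup>2"
    using assms(2) by (metis mult_left_mono zero_le_mult_iff zero_le_power2 less_le)
  show "0 \<le> m" using \<open>0 \<le> s\<close> \<open>s < real_of_int m\<close> by linarith
qed (use assms(1,2) in auto)

end
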